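(* Let $X$ be a non-empty set, $\overline X=X\cup X'$ and $\widetilde X=\overline X\cup\{(x\wedge y):x,y\in\overline X\}$. Make the free semigroup $\widetilde X^+$ into a binary semigroup by $(u\wedge v)=(\iota u\wedge v\tau)$ for $u,v\in\widetilde X^+$. Then the relation $\widetilde\Theta(\mathcal{CS},X)=\{(u,v)\in\widetilde X^+\times\widetilde X^+:\overline{u}=\overline{v}\}$ (where $\overline{w}$ denotes the reduced form of $w$) is a congruence on the binary semigroup $\widetilde X^+$, and the factor $\widetilde X^+/\widetilde\Theta(\mathcal{CS},X)$ together with the matched mapping $\xi\colon\overline X\to \widetilde X^+/\widetilde\Theta(\mathcal{CS},X)$, $y\mapsto y\widetilde\Theta(\mathcal{CS},X)$, is a bifree object in the class $\mathcal{CS}$ of completely simple semigroups on $X$.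
   Context: $X'=\{x':x\in X\}$ is a set disjoint from $X$ in bijection with $X$ via $x\mapsto x'$; extend $'$ to $\overline X$ by $(x')'=x$. The free binary semigroup $F_2(\overline X)$ is the smallest set $W$ of nonempty words over $\overline X\cup\{(,\wedge,)\}$ containing $\overline X$ and closed under concatenation $uv$ and under $(u,v)\mapsto(u\wedge v)$, with these two operations. Elements $(x\wedge y)$, $x,y\in\overline X$, are called $\wedge$-letters; $\widetilde X^+$ is the free semigroup on $\widetilde X$, viewed as a subset of $F_2(\overline X)$. For a term $w$, $\iota w$ [$w\tau$] is the first [last] element of $\overline X$ occurring in $w$. Reductions ($u,v$ terms, $x,y,z\in\overline X$): (R0) $(u\wedge v)\rightsquigarrow(\iota u\wedge v\tau)$; (R1) $x(y\wedge x)\rightsquigarrow x$; (R2) $(x\wedge y)x\rightsquigarrow x$; (R3) $(x\wedge y)(x\wedge z)\rightsquigarrow(x\wedge z)$; (R4) $(z\wedge x)(y\wedge x)\rightsquigarrow(z\wedge x)$; (R5) $x'x\rightsquigarrow(x'\wedge x)$, applied to segments of a term. It is known (Auinger) that every term has a unique reduced form (one to which no reduction applies) obtainable by repeated reductions; denote it $\overline w$. For a regular semigroup $S$, a map $\nu\colon\overline X\to S$ is matched if $x'\nu$ is an inverse of $x\nu$ for all $x\in X$. A bifree object in a class $\mathcal K$ of regular semigroups on $X$ is $B\in\mathcal K$ with a matched map $\xi\colon\overline X\to B$ such that for every $S\in\mathcal K$ and matched $\nu\colon\overline X\to S$ there is a unique homomorphism $\phi\colon B\to S$ with $\xi\phi=\nu$.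 *)

theory Defs
  imports "HOL-Algebra.Group"
begin

text \<open>A semigroup is given by a monoid record of HOL-Algebra; its one field is ignored.\<close>

definition semigrp :: "('b, 'c) monoid_scheme \<Rightarrow> bool" where
  "semigrp S \<longleftrightarrow>
     (\<forall>x \<in> carrier S. \<forall>y \<in> carrier S. x \<otimes>\<^bsub>S\<^esub> y \<in> carrier S) \<and>
     (\<forall>x \<in> carrier S. \<forall>y \<in> carrier S. \<forall>z \<in> carrier S.
        (x \<otimes>\<^bsub>S\<^esub> y) \<otimes>\<^bsub>S\<^esub> z = x \<otimes>\<^bsub>S\<^esub> (y \<otimes>\<^bsub>S\<^esub> z))"

definition sg_ideal :: "('b, 'c) monoid_scheme \<Rightarrow> 'b set \<Rightarrow> bool" where
  "sg_ideal S I \<longleftrightarrow> I \<subseteq> carrier S \<and> I \<noteq> {} \<and>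
     (\<forall>s \<in> carrier S. \<forall>i \<in> I. s \<otimes>\<^bsub>S\<^esub> i \<in> I \<and> i \<otimes>\<^bsub>S\<^esub> s \<in> I)"

definition sg_simple :: "('b, 'c) monoid_scheme \<Rightarrow> bool" where
  "sg_simple S \<longleftrightarrow> (\<forall>I. sg_ideal S I \<longrightarrow> I = carrier S)"

definition sg_idempotent :: "('b, 'c) monoid_scheme \<Rightarrow> 'b \<Rightarrow> bool" where
  "sg_idempotent S e \<longleftrightarrow> e \<in> carrier S \<and> e \<otimes>\<^bsub>S\<^esub> e = e"

text \<open>Primitive idempotent: minimal among idempotents w.r.t. the natural order
  (f \<le> e iff f = ef = fe).\<close>
definition sg_primitive :: "('b, 'c) monoid_scheme \<Rightarrow> 'b \<Rightarrow> bool" where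
  "sg_primitive S e \<longleftrightarrow> sg_idempotent S e \<and>
     (\<forall>f. sg_idempotent S f \<and> f = e \<otimes>\<^bsub>S\<^esub> f \<and> f = f \<otimes>\<^bsub>S\<^esub> e \<longrightarrow> f = e)"

definition completely_simple :: "('b, 'c) monoid_scheme \<Rightarrow> bool" where
  "completely_simple S \<longleftrightarrow> semigrp S \<and> carrier S \<noteq> {} \<and> sg_simple S \<and>
     (\<exists>e. sg_primitive S e)"

definition sg_inverse :: "('b, 'c) monoid_scheme \<Rightarrow> 'b \<Rightarrow> 'b \<Rightarrow> bool" where
  "sg_inverse S a b \<longleftrightarrow> a \<in> carrier S \<and> b \<in> carrier S \<and>
     a \<otimes>\<^bsub>S\<^esub> b \<otimes>\<^bsub>S\<^esub> a = a \<and> b \<otimes>\<^bsub>S\<^esub> a \<otimes>\<^bsub>S\<^esub> b = b"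

text \<open>Elements of X-bar = X \<union> X': Pos x stands for x, Neg x for x'. The set X is the
  (arbitrary, automatically non-empty) type 'a.\<close>
datatype 'a lit = Pos 'a | Neg 'a

fun lprime :: "'a lit \<Rightarrow> 'a lit" where
  "lprime (Pos x) = Neg x"
| "lprime (Neg x) = Pos x"

text \<open>Matched map X-bar \<rightarrow> S: x' \<nu> is an inverse of x \<nu> for every x in X
  (values in the carrier are implied).\<close>
definition matched :: "('b, 'c) monoid_scheme \<Rightarrow> ('a lit \<Rightarrow> 'b) \<Rightarrow> bool" where
  "matched S \<nu> \<longleftrightarrow> (\<forall>x. sg_inverse S (\<nu> (Pos x)) (\<nu> (Neg x)))"

text \<open>Letters of X-tilde: Lt x is x \<in> X-bar, Wg x y is the wedge letter (x \<and> y).\<close>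
datatype 'a tlet = Lt "'a lit" | Wg "'a lit" "'a lit"

fun first_lit :: "'a tlet \<Rightarrow> 'a lit" where
  "first_lit (Lt x) = x"
| "first_lit (Wg x y) = x"

fun last_lit :: "'a tlet \<Rightarrow> 'a lit" where
  "last_lit (Lt x) = x"
| "last_lit (Wg x y) = y"

text \<open>Words of X-tilde^+ are non-empty lists of letters.\<close>
definition iota :: "'a tlet list \<Rightarrow> 'a lit" where
  "iota w = first_lit (hd w)"

definition tau :: "'a tlet list \<Rightarrow> 'a lit" where
  "tau w = last_lit (last w)"

definition wedge :: "'a tlet list \<Rightarrow> 'a tlet list \<Rightarrow> 'a tlet list" where
  "wedge u v = [Wg (iota u) (tau v)]"

text \<open>One-step reductions (R1)--(R5) applied to segments. On words of X-tilde^+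
  (R0) never applies, and the reductions keep us inside X-tilde^+.\<close>
inductive_set red1 :: "('a tlet list \<times> 'a tlet list) set" where
  R1: "(u @ [Lt x, Wg y x] @ v, u @ [Lt x] @ v) \<in> red1"
| R2: "(u @ [Wg x y, Lt x] @ v, u @ [Lt x] @ v) \<in> red1"
| R3: "(u @ [Wg x y, Wg x z] @ v, u @ [Wg x z] @ v) \<in> red1"
| R4: "(u @ [Wg z x, Wg y x] @ v, u @ [Wg z x] @ v) \<in> red1"
| R5: "(u @ [Lt (lprime x), Lt x] @ v, u @ [Wg (lprime x) x] @ v) \<in> red1"

definition reduced :: "'a tlet list \<Rightarrow> bool" where
  "reduced w \<longleftrightarrow> (\<forall>w'. (w, w') \<notin> red1)"

text \<open>The reduced form (unique by Auinger's theorem).\<close>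
definition redform :: "'a tlet list \<Rightarrow> 'a tlet list" where
  "redform w = (THE r. (w, r) \<in> red1\<^sup>* \<and> reduced r)"

definition words :: "'a tlet list set" where
  "words = {w. w \<noteq> []}"

definition Theta_CS :: "('a tlet list \<times> 'a tlet list) set" where
  "Theta_CS = {(u, v). u \<in> words \<and> v \<in> words \<and> redform u = redform v}"

definition bs_congruence :: "('a tlet list \<times> 'a tlet list) set \<Rightarrow> bool" where
  "bs_congruence R \<longleftrightarrow> equiv words R \<and>
     (\<forall>(u, v) \<in> R. \<forall>(s, t) \<in> R. (u @ s, v @ t) \<in> R \<and> (wedge u s, wedge v t) \<in> R)"

definition FQ :: "'a tlet list set monoid" where
  "FQ = \<lparr> carrier = words // Theta_CS,
          mult = (\<lambda>A B. Theta_CS `` {(SOME u. u \<in> A) @ (SOME v. v \<in> B)}),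
          one = undefined \<rparr>"

definition xi :: "'a lit \<Rightarrow> 'a tlet list set" where
  "xi y = Theta_CS `` {[Lt y]}"

end

theory Submission
  imports Defs
begin

text \<open>
  Reduced forms are computed by a stack machine that reads a word from left to right and
  contracts each new letter with the top of the stack as long as one of (R1)--(R5) applies.
  Overlapping contractions commute, so the machine is invariant under reductions; it therefore
  computes the reduced form, and reduced forms are compatible with concatenation. Since reductions
  preserve \<iota> and \<tau>, they are compatible with the wedge as well.

  In the factor every word w has an inverse word w\<inverse> such that w w\<inverse> and w\<inverse> w are
  congruent to wedge letters; this makes the factor simple, with the idempotents (x \<and> x) primitive.

  For the universal property, (x \<and> y) has to be sent to the idempotent of R(x\<nu>) \<inter> L(y\<nu>), which
  exists and is unique in a completely simple semigroup; evaluating words letter by letter then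
  respects every contraction, hence factors through the congruence.
\<close>

section \<open>Reduced forms\<close>

fun contract :: "'a tlet \<Rightarrow> 'a tlet \<Rightarrow> 'a tlet option" where
  "contract (Lt x) (Lt y) = (if x = lprime y then Some (Wg x y) else None)"
| "contract (Lt x) (Wg y z) = (if z = x then Some (Lt x) else None)"
| "contract (Wg x y) (Lt z) = (if z = x then Some (Lt z) else None)"
| "contract (Wg x y) (Wg z w) =
     (if x = z then Some (Wg x w) else if y = w then Some (Wg x y) else None)"

lemma lprime_lprime [simp]: "lprime (lprime x) = x"
  by (cases x) auto

lemma red1_iff_contract:
  "(s, t) \<in> red1 \<longleftrightarrow> (\<exists>u v a b c. s = u @ [a, b] @ v \<and> t = u @ [c] @ v \<and> contract a b = Some c)"
proof
  assume "(s, t) \<in> red1"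
  then show "\<exists>u v a b c. s = u @ [a, b] @ v \<and> t = u @ [c] @ v \<and> contract a b = Some c"
    by cases fastforce+
next
  assume "\<exists>u v a b c. s = u @ [a, b] @ v \<and> t = u @ [c] @ v \<and> contract a b = Some c"
  then obtain u v a b c where st: "s = u @ [a, b] @ v" "t = u @ [c] @ v" "contract a b = Some c"
    by blast
  from st(3) show "(s, t) \<in> red1"
    unfolding st(1,2)
    by (cases a; cases b)
      (auto split: if_splits intro: red1.intros[simplified] red1.R5[of _ "lprime _", simplified])
qed

lemma contract_ends:
  "contract a b = Some c \<Longrightarrow> first_lit c = first_lit a \<and> last_lit c = last_lit b"
  by (cases a; cases b) (auto split: if_splits)

text \<open>The critical pairs: two overlapping contractions in e a b lead to the same result.\<close>

lemma contract_assoc: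
  assumes "contract e a = Some f" "contract a b = Some d"
  shows "contract f b = contract e d \<and> (contract f b = None \<longrightarrow> f = e \<and> b = d)"
  using assms by (cases e; cases a; cases b) (auto split: if_splits)

lemma red1_append_context: "(s, t) \<in> red1 \<Longrightarrow> (p @ s @ q, p @ t @ q) \<in> red1"
  unfolding red1_iff_contract by (metis append.assoc)

lemma red1s_append_context: "(s, t) \<in> red1\<^sup>* \<Longrightarrow> (p @ s @ q, p @ t @ q) \<in> red1\<^sup>*"
  by (induction rule: rtrancl_induct) (auto intro: rtrancl_into_rtrancl red1_append_context)

lemma red1_ends: "(s, t) \<in> red1 \<Longrightarrow> iota s = iota t \<and> tau s = tau t"
  unfolding red1_iff_contract iota_def tau_def
  by (auto dest!: contract_ends simp: hd_append last_append)

lemma red1s_ends: "(s, t) \<in> red1\<^sup>* \<Longrightarrow> iota s = iota t \<and> tau s = tau t"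
  by (induction rule: rtrancl_induct) (auto dest: red1_ends)

lemma reducedI: "successively (\<lambda>a b. contract a b = None) w \<Longrightarrow> reduced w"
  unfolding reduced_def red1_iff_contract by (auto simp: successively_append_iff)

text \<open>A stack holds a word in reverse order, its top being the last letter.\<close>

fun push :: "'a tlet list \<Rightarrow> 'a tlet \<Rightarrow> 'a tlet list" where
  "push [] a = [a]"
| "push (e # r) a = (case contract e a of Some f \<Rightarrow> push r f | None \<Rightarrow> a # e # r)"

abbreviation irreducible_stack :: "'a tlet list \<Rightarrow> bool" where
  "irreducible_stack r \<equiv> successively (\<lambda>a e. contract e a = None) r"

lemma irreducible_stack_push: "irreducible_stack r \<Longrightarrow> irreducible_stack (push r a)"
  by (induction r a rule: push.induct) (auto simp: successively_Cons split: option.split)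

lemma irreducible_stack_foldl_push: "irreducible_stack r \<Longrightarrow> irreducible_stack (foldl push r w)"
  by (induction w arbitrary: r) (auto intro: irreducible_stack_push)

lemma push_contract:
  "irreducible_stack r \<Longrightarrow> contract a b = Some d \<Longrightarrow> push (push r a) b = push r d"
proof (induction r arbitrary: a b d)
  case Nil
  then show ?case by simp
next
  case (Cons e r)
  show ?case
  proof (cases "contract e a")
    case None
    then show ?thesis using Cons.prems by simp
  next
    case (Some f)
    note overlap = contract_assoc[OF Some Cons.prems(2)]
    show ?thesis
    proof (cases "contract f b")
      case None
      with overlap Cons.prems(1) show ?thesis
        by (cases r) (auto simp: Some)
    next
      case (Some g)
      with overlap have "contract e d = Some g" by simp
      with Some Cons.IH[of f b g] Cons.prems(1) \<open>contract e a = Some f\<close> show ?thesis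
        by (auto simp: successively_Cons)
    qed
  qed
qed

lemma foldl_push_red1s:
  assumes "irreducible_stack r" "(s, t) \<in> red1\<^sup>*"
  shows "foldl push r s = foldl push r t"
  using assms(2)
proof induction
  case (step t t')
  then obtain u v a b c where "t = u @ [a, b] @ v" "t' = u @ [c] @ v" "contract a b = Some c"
    unfolding red1_iff_contract by blast
  with step.IH push_contract[OF irreducible_stack_foldl_push[OF assms(1)]] show ?case
    by simp
qed simp

lemma red1s_foldl_push: "(rev r @ w, rev (foldl push r w)) \<in> red1\<^sup>*"
proof (induction w arbitrary: r)
  case (Cons a w)
  have "(rev r @ [a], rev (push r a)) \<in> red1\<^sup>*"
  proof (induction r a rule: push.induct)
    case (2 e r a)
    have "(rev r @ [e, a] @ [], rev r @ [f] @ []) \<in> red1" if "contract e a = Some f" for f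
      using that unfolding red1_iff_contract by blast
    with 2 show ?case
      by (auto split: option.split intro: converse_rtrancl_into_rtrancl)
  qed simp
  from red1s_append_context[OF this, of "[]" w] Cons.IH[of "push r a"] show ?case
    by simp
qed simp

lemma redform_eq_rev_foldl_push: "redform w = rev (foldl push [] w)"
  unfolding redform_def
proof (rule the_equality)
  show "(w, rev (foldl push [] w)) \<in> red1\<^sup>* \<and> reduced (rev (foldl push [] w))"
    using red1s_foldl_push[of "[]" w] irreducible_stack_foldl_push[of "[]" w]
    by (auto intro: reducedI)
next
  fix r assume r: "(w, r) \<in> red1\<^sup>* \<and> reduced r"
  have "(r, rev (foldl push [] r)) \<in> red1\<^sup>*"
    using red1s_foldl_push[of "[]" r] by simp
  with r have "r = rev (foldl push [] r)"
    unfolding reduced_def by (metis converse_rtranclE)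
  with r show "r = rev (foldl push [] w)"
    using foldl_push_red1s[of "[]" w r] by simp
qed

lemma red1s_redform: "(w, redform w) \<in> red1\<^sup>*"
  using red1s_foldl_push[of "[]" w] by (simp add: redform_eq_rev_foldl_push)

lemma redform_red1s: "(s, t) \<in> red1\<^sup>* \<Longrightarrow> redform s = redform t"
  using foldl_push_red1s[of "[]" s t] by (simp add: redform_eq_rev_foldl_push)

lemma redform_single [simp]: "redform [a] = [a]"
  by (simp add: redform_eq_rev_foldl_push)

lemma redform_contract:
  "contract a b = Some c \<Longrightarrow> redform (p @ [a, b] @ q) = redform (p @ [c] @ q)"
  by (rule redform_red1s, rule r_into_rtrancl) (use red1_iff_contract in blast)

lemma redform_append: "redform (u @ v) = redform (redform u @ redform v)"
proof (rule redform_red1s)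
  have "(u @ v, redform u @ v) \<in> red1\<^sup>*"
    using red1s_append_context[OF red1s_redform, of "[]" u v] by simp
  also have "(redform u @ v, redform u @ redform v) \<in> red1\<^sup>*"
    using red1s_append_context[OF red1s_redform, of "redform u" v "[]"] by simp
  finally show "(u @ v, redform u @ redform v) \<in> red1\<^sup>*" .
qed

lemma redform_append_cong:
  "redform u = redform u' \<Longrightarrow> redform v = redform v' \<Longrightarrow> redform (u @ v) = redform (u' @ v')"
  by (metis redform_append)

lemma iota_redform: "iota (redform w) = iota w"
  using red1s_ends[OF red1s_redform[of w]] by simp

lemma tau_redform: "tau (redform w) = tau w"
  using red1s_ends[OF red1s_redform[of w]] by simp

section \<open>The factor semigroup\<close>

lemma Theta_CS_iff: "(u, v) \<in> Theta_CS \<longleftrightarrow> u \<noteq> [] \<and> v \<noteq> [] \<and> redform u = redform v"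
  by (simp add: Theta_CS_def words_def)

lemma equiv_Theta_CS: "equiv words Theta_CS"
  by (auto simp: equiv_def refl_on_def sym_def trans_def Theta_CS_iff words_def)

lemma bs_congruence_Theta_CS: "bs_congruence Theta_CS"
  unfolding bs_congruence_def
proof (intro conjI equiv_Theta_CS ballI, clarify)
  fix u v s t :: "'a tlet list"
  assume "(u, v) \<in> Theta_CS" "(s, t) \<in> Theta_CS"
  then have "u \<noteq> []" "v \<noteq> []" "s \<noteq> []" "t \<noteq> []" "redform u = redform v" "redform s = redform t"
    by (auto simp: Theta_CS_iff)
  moreover from this have "iota u = iota v" "tau s = tau t"
    by (metis iota_redform, metis tau_redform)
  ultimately show "(u @ s, v @ t) \<in> Theta_CS \<and> (wedge u s, wedge v t) \<in> Theta_CS"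
    by (auto simp: Theta_CS_iff wedge_def intro: redform_append_cong)
qed

lemma redform_context:
  "redform u = redform u' \<Longrightarrow> redform (p @ u @ q) = redform (p @ u' @ q)"
  by (intro redform_append_cong) auto

fun letter_inv :: "'a tlet \<Rightarrow> 'a tlet" where
  "letter_inv (Lt x) = Lt (lprime x)"
| "letter_inv (Wg x y) = Wg x y"

text \<open>In (v u w)\<inverse> = (u w)\<inverse> (\<iota>u \<and> v\<tau>) v\<inverse> the glue letter (\<iota>u \<and> v\<tau>) is absorbed by its
  neighbours once (u w) (u w)\<inverse>, resp. v\<inverse> v, has been reduced to a wedge letter; so a word
  times its inverse, in either order, reduces to a single wedge letter.\<close>

fun word_inv :: "'a tlet list \<Rightarrow> 'a tlet list" where
  "word_inv [] = []"
| "word_inv [v] = [letter_inv v]"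
| "word_inv (v # u # w) = word_inv (u # w) @ [Wg (first_lit u) (last_lit v), letter_inv v]"

lemma redform_word_inv_append:
  "w \<noteq> [] \<Longrightarrow> \<exists>s. redform (word_inv w @ w) = [Wg s (tau w)]"
proof (induction w rule: word_inv.induct)
  case (2 v)
  then show ?case
    by (cases v) (auto simp: tau_def redform_eq_rev_foldl_push)
next
  case (3 v u w)
  obtain s where s: "redform (word_inv (u # w) @ u # w) = [Wg s (tau (u # w))]"
    using "3.IH" by blast
  obtain s0 where s0: "redform [letter_inv v, v] = redform [Wg s0 (last_lit v)]"
    by (cases v) (auto simp: redform_eq_rev_foldl_push)
  let ?g = "Wg (first_lit u) (last_lit v)"
  have "redform (word_inv (v # u # w) @ v # u # w)
      = redform (word_inv (u # w) @ [?g] @ [letter_inv v, v] @ u # w)"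
    by simp
  also have "\<dots> = redform (word_inv (u # w) @ [?g, Wg s0 (last_lit v)] @ u # w)"
    using redform_context[OF s0, of "word_inv (u # w) @ [?g]"] by simp
  also have "\<dots> = redform (word_inv (u # w) @ [?g, u] @ w)"
    using redform_contract[of ?g "Wg s0 (last_lit v)" ?g] by auto
  also have "\<dots> = redform (word_inv (u # w) @ u # w)"
    using redform_contract[of ?g u u] by (cases u) auto
  finally show ?case
    using s by (simp add: tau_def)
qed simp

lemma redform_append_word_inv:
  "w \<noteq> [] \<Longrightarrow> \<exists>t. redform (w @ word_inv w) = [Wg (iota w) t]"
proof (induction w rule: word_inv.induct)
  case (2 v)
  then show ?case
    by (cases v) (auto simp: iota_def redform_eq_rev_foldl_push)
next
  case (3 v u w)
  obtain t where t: "redform (u # w @ word_inv (u # w)) = [Wg (first_lit u) t]"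
    using "3.IH" by (auto simp: iota_def)
  obtain t0 where t0: "redform [v, letter_inv v] = [Wg (first_lit v) t0]"
    by (cases v) (auto simp: redform_eq_rev_foldl_push)
  let ?g = "Wg (first_lit u) (last_lit v)"
  have "redform ((v # u # w) @ word_inv (v # u # w))
      = redform ([v] @ (u # w @ word_inv (u # w)) @ [?g, letter_inv v])"
    by simp
  also have "\<dots> = redform ([v] @ [Wg (first_lit u) t] @ [?g, letter_inv v])"
    by (rule redform_context) (simp add: t)
  also have "\<dots> = redform ([v] @ [Wg (first_lit u) t, ?g] @ [letter_inv v])"
    by simp
  also have "\<dots> = redform ([v, ?g] @ [letter_inv v])"
    using redform_contract[of "Wg (first_lit u) t" ?g ?g "[v]"] by simp
  also have "\<dots> = redform [v, letter_inv v]"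
    using redform_contract[of v ?g v "[]"] by (cases v) auto
  finally show ?case
    using t0 by (simp add: iota_def)
qed simp

definition theta_class :: "'a tlet list \<Rightarrow> 'a tlet list set" where
  "theta_class w = Theta_CS `` {w}"

lemma mem_theta_class: "v \<in> theta_class u \<longleftrightarrow> u \<noteq> [] \<and> v \<noteq> [] \<and> redform u = redform v"
  by (simp add: theta_class_def Theta_CS_iff)

lemma theta_class_eq_iff:
  "u \<noteq> [] \<Longrightarrow> v \<noteq> [] \<Longrightarrow> theta_class u = theta_class v \<longleftrightarrow> redform u = redform v"
  unfolding theta_class_def
  using eq_equiv_class_iff[OF equiv_Theta_CS, of u v] by (simp add: words_def Theta_CS_iff)

lemma carrier_FQ: "A \<in> carrier FQ \<longleftrightarrow> (\<exists>w. w \<noteq> [] \<and> A = theta_class w)"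
  by (auto simp: FQ_def quotient_def theta_class_def words_def)

lemma theta_class_in_carrier [simp]: "w \<noteq> [] \<Longrightarrow> theta_class w \<in> carrier FQ"
  using carrier_FQ by blast

lemma some_mem_theta_class: "u \<noteq> [] \<Longrightarrow> (SOME x. x \<in> theta_class u) \<in> theta_class u"
  by (rule someI[of _ u]) (simp add: mem_theta_class)

lemma theta_class_mult:
  assumes "u \<noteq> []" "v \<noteq> []"
  shows "theta_class u \<otimes>\<^bsub>FQ\<^esub> theta_class v = theta_class (u @ v)"
proof -
  define u' where "u' = (SOME x. x \<in> theta_class u)"
  define v' where "v' = (SOME x. x \<in> theta_class v)"
  have "u' \<in> theta_class u" "v' \<in> theta_class v"
    unfolding u'_def v'_def using assms by (auto intro: some_mem_theta_class)
  then have "u' \<noteq> []" "v' \<noteq> []" "redform (u' @ v') = redform (u @ v)"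
    by (auto simp: mem_theta_class intro: redform_append_cong)
  then show ?thesis
    using assms
    by (simp add: FQ_def u'_def v'_def flip: theta_class_def) (simp add: theta_class_eq_iff)
qed

lemma xi_eq: "xi y = theta_class [Lt y]"
  by (simp add: xi_def theta_class_def)

lemma semigrp_FQ: "semigrp FQ"
  unfolding semigrp_def
proof (intro conjI ballI)
  fix A B :: "'a tlet list set" assume "A \<in> carrier FQ" "B \<in> carrier FQ"
  then show "A \<otimes>\<^bsub>FQ\<^esub> B \<in> carrier FQ"
    by (auto simp: carrier_FQ theta_class_mult)
next
  fix A B C :: "'a tlet list set" assume "A \<in> carrier FQ" "B \<in> carrier FQ" "C \<in> carrier FQ"
  then show "A \<otimes>\<^bsub>FQ\<^esub> B \<otimes>\<^bsub>FQ\<^esub> C = A \<otimes>\<^bsub>FQ\<^esub> (B \<otimes>\<^bsub>FQ\<^esub> C)"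
    by (auto simp: carrier_FQ theta_class_mult)
qed

lemma matched_FQ_xi: "matched FQ xi"
  unfolding matched_def sg_inverse_def xi_eq
  by (simp add: theta_class_mult theta_class_eq_iff redform_eq_rev_foldl_push)

lemma redform_absorb_wedge_right: "b \<noteq> [] \<Longrightarrow> redform (b @ [Wg s (tau b)]) = redform b"
proof -
  assume "b \<noteq> []"
  then obtain b0 l where b: "b = b0 @ [l]"
    by (metis rev_exhaust)
  have "contract l (Wg s (last_lit l)) = Some l"
    by (cases l) auto
  from redform_contract[OF this, of b0 "[]"] show ?thesis
    by (simp add: b tau_def)
qed

lemma sg_simple_FQ: "sg_simple FQ"
  unfolding sg_simple_def
proof (intro allI impI)
  fix I :: "'a tlet list set set"
  assume I: "sg_ideal FQ I"
  then obtain a where a: "a \<noteq> []" "theta_class a \<in> I"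
    unfolding sg_ideal_def by (metis carrier_FQ equals0I subsetD)
  have "B \<in> I" if "B \<in> carrier FQ" for B
  proof -
    obtain b where b: "b \<noteq> []" "B = theta_class b"
      using \<open>B \<in> carrier FQ\<close> by (auto simp: carrier_FQ)
    define q where "q = [Wg (tau a) (tau b)]"
    obtain s where s: "redform (word_inv (a @ q) @ a @ q) = [Wg s (tau b)]"
      using redform_word_inv_append[of "a @ q"] by (auto simp: q_def tau_def)
    \<comment> \<open>B = (b c\<inverse>) A q for c = a q, since c\<inverse> c reduces to a wedge letter that b absorbs\<close>
    have "redform (b @ word_inv (a @ q) @ a @ q) = redform (b @ [Wg s (tau b)])"
      by (rule redform_append_cong) (simp_all add: s)
    also have "\<dots> = redform b"
      using b(1) by (rule redform_absorb_wedge_right)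
    finally have "B = theta_class (b @ word_inv (a @ q)) \<otimes>\<^bsub>FQ\<^esub> theta_class a \<otimes>\<^bsub>FQ\<^esub> theta_class q"
      using a b by (simp add: theta_class_mult theta_class_eq_iff q_def)
    moreover have "theta_class (b @ word_inv (a @ q)) \<otimes>\<^bsub>FQ\<^esub> theta_class a \<in> I"
      using I a b unfolding sg_ideal_def by simp
    ultimately show "B \<in> I"
      using I unfolding sg_ideal_def by (simp add: q_def)
  qed
  with I show "I = carrier FQ"
    unfolding sg_ideal_def by blast
qed

lemma sg_primitive_FQ: "sg_primitive FQ (theta_class [Wg x x])"
  unfolding sg_primitive_def sg_idempotent_def
proof (intro conjI allI impI)
  show "theta_class [Wg x x] \<in> carrier FQ"
    "theta_class [Wg x x] \<otimes>\<^bsub>FQ\<^esub> theta_class [Wg x x] = theta_class [Wg x x]"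
    by (simp_all add: theta_class_mult theta_class_eq_iff redform_eq_rev_foldl_push)
next
  fix F
  assume "(F \<in> carrier FQ \<and> F \<otimes>\<^bsub>FQ\<^esub> F = F) \<and>
    F = theta_class [Wg x x] \<otimes>\<^bsub>FQ\<^esub> F \<and> F = F \<otimes>\<^bsub>FQ\<^esub> theta_class [Wg x x]"
  then obtain f where f: "f \<noteq> []" "F = theta_class f"
    and ff: "redform (f @ f) = redform f"
    and ef: "redform ([Wg x x] @ f) = redform f"
    and fe: "redform (f @ [Wg x x]) = redform f"
    by (auto simp: carrier_FQ theta_class_mult theta_class_eq_iff)
  have "iota f = iota ([Wg x x] @ f)"
    by (metis ef iota_redform)
  then have "iota f = x"
    by (simp add: iota_def)
  then obtain t where t: "redform (f @ word_inv f) = [Wg x t]"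
    using redform_append_word_inv[OF f(1)] by auto
  \<comment> \<open>f = f e = f (f f\<inverse> e) = f f\<inverse> e = e, as f f\<inverse> = (x \<and> t) is absorbed by e = (x \<and> x)\<close>
  have ffe: "redform (f @ word_inv f @ [Wg x x]) = [Wg x x]"
  proof -
    have "redform ((f @ word_inv f) @ [Wg x x]) = redform ([Wg x t] @ [Wg x x])"
      by (rule redform_append_cong) (simp_all add: t)
    also have "\<dots> = [Wg x x]"
      using redform_contract[of "Wg x t" "Wg x x" "Wg x x" "[]" "[]"] by simp
    finally show ?thesis by simp
  qed
  have "redform f = redform (f @ f @ word_inv f @ [Wg x x])"
    using fe redform_append_cong[of f f "f @ word_inv f @ [Wg x x]" "[Wg x x]"] ffe by simp
  also have "\<dots> = redform ((f @ f) @ word_inv f @ [Wg x x])"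
    by simp
  also have "\<dots> = [Wg x x]"
    using redform_append_cong[OF ff, of "word_inv f @ [Wg x x]"] ffe by simp
  finally show "F = theta_class [Wg x x]"
    using f by (simp add: theta_class_eq_iff)
qed

lemma completely_simple_FQ: "completely_simple FQ"
  unfolding completely_simple_def
  using semigrp_FQ sg_simple_FQ sg_primitive_FQ
  by (metis empty_iff sg_idempotent_def sg_primitive_def)

section \<open>Completely simple semigroups\<close>

text \<open>g is the idempotent in the intersection of the R-class of a and the L-class of b;
  in a completely simple semigroup it exists and is unique, and it interprets (a \<and> b).\<close>

definition RL_idempotent :: "('b, 'c) monoid_scheme \<Rightarrow> 'b \<Rightarrow> 'b \<Rightarrow> 'b \<Rightarrow> bool" where
  "RL_idempotent S a b g \<longleftrightarrow> g \<in> carrier S \<and> g \<otimes>\<^bsub>S\<^esub> g = g \<and>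
     g \<otimes>\<^bsub>S\<^esub> a = a \<and> (\<exists>s \<in> carrier S. g = a \<otimes>\<^bsub>S\<^esub> s) \<and>
     b \<otimes>\<^bsub>S\<^esub> g = b \<and> (\<exists>t \<in> carrier S. g = t \<otimes>\<^bsub>S\<^esub> b)"

definition rl_idem :: "('b, 'c) monoid_scheme \<Rightarrow> 'b \<Rightarrow> 'b \<Rightarrow> 'b" where
  "rl_idem S a b = (SOME g. RL_idempotent S a b g)"

locale sgrp =
  fixes S :: "('b, 'c) monoid_scheme" (structure)
  assumes semigrp: "semigrp S"
begin

lemma m_closed [intro, simp]: "x \<in> carrier S \<Longrightarrow> y \<in> carrier S \<Longrightarrow> x \<otimes> y \<in> carrier S"
  using semigrp unfolding semigrp_def by blast

lemma m_assoc:
  "x \<in> carrier S \<Longrightarrow> y \<in> carrier S \<Longrightarrow> z \<in> carrier S \<Longrightarrow> x \<otimes> y \<otimes> z = x \<otimes> (y \<otimes> z)"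
  using semigrp unfolding semigrp_def by blast

lemma m_assoc_subst:
  "x \<otimes> y = z \<Longrightarrow> x \<in> carrier S \<Longrightarrow> y \<in> carrier S \<Longrightarrow> w \<in> carrier S \<Longrightarrow>
    x \<otimes> (y \<otimes> w) = z \<otimes> w"
  by (simp flip: m_assoc)

lemma m_assoc_subst3:
  "x \<otimes> (y \<otimes> z) = u \<Longrightarrow> x \<in> carrier S \<Longrightarrow> y \<in> carrier S \<Longrightarrow> z \<in> carrier S \<Longrightarrow>
    w \<in> carrier S \<Longrightarrow> x \<otimes> (y \<otimes> (z \<otimes> w)) = u \<otimes> w"
  by (simp flip: m_assoc)

lemma RL_idempotent_unique:
  assumes "a \<in> carrier S" "b \<in> carrier S" "RL_idempotent S a b g" "RL_idempotent S a b h"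
  shows "g = h"
proof -
  obtain s t where "s \<in> carrier S" "h = a \<otimes> s" "t \<in> carrier S" "g = t \<otimes> b"
    using assms(3,4) unfolding RL_idempotent_def by blast
  with assms have "g \<otimes> h = h" and "g \<otimes> h = g"
    unfolding RL_idempotent_def by (metis m_assoc)+
  then show ?thesis
    by simp
qed

lemma RL_idempotent_inverse_product:
  assumes "sg_inverse S b a"
  shows "RL_idempotent S a b (a \<otimes> b)"
proof -
  from assms have c: "a \<in> carrier S" "b \<in> carrier S"
    and aba: "a \<otimes> (b \<otimes> a) = a" and bab: "b \<otimes> (a \<otimes> b) = b"
    unfolding sg_inverse_def by (auto simp: m_assoc)
  then have "a \<otimes> b \<otimes> (a \<otimes> b) = a \<otimes> b"
    by (simp add: m_assoc m_assoc_subst3[OF aba c(1) c(2) c(1)])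
  with c aba bab show ?thesis
    unfolding RL_idempotent_def by (auto simp: m_assoc)
qed

lemma RL_idempotent_mult_same_left:
  assumes "a \<in> carrier S" "RL_idempotent S a b g" "RL_idempotent S a c h"
  shows "g \<otimes> h = h"
proof -
  obtain s where "s \<in> carrier S" "h = a \<otimes> s"
    using assms(3) unfolding RL_idempotent_def by blast
  with assms(1,2) show ?thesis
    unfolding RL_idempotent_def by (simp flip: m_assoc)
qed

lemma RL_idempotent_mult_same_right:
  assumes "b \<in> carrier S" "RL_idempotent S a b g" "RL_idempotent S c b h"
  shows "g \<otimes> h = g"
proof -
  obtain t where "t \<in> carrier S" "g = t \<otimes> b"
    using assms(2) unfolding RL_idempotent_def by blast
  with assms(1,3) show ?thesis
    unfolding RL_idempotent_def by (simp add: m_assoc)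
qed

lemma simple_two_sided_multiple:
  assumes "sg_simple S" "p \<in> carrier S" "a \<in> carrier S"
  obtains x y where "x \<in> carrier S" "y \<in> carrier S" "a = x \<otimes> (p \<otimes> y)"
proof -
  let ?I = "{x \<otimes> (p \<otimes> y) | x y. x \<in> carrier S \<and> y \<in> carrier S}"
  have "sg_ideal S ?I"
    unfolding sg_ideal_def
  proof (intro conjI ballI)
    show "?I \<subseteq> carrier S" "?I \<noteq> {}"
      using assms(2) by auto
    fix s i assume "s \<in> carrier S" "i \<in> ?I"
    then obtain x y where "x \<in> carrier S" "y \<in> carrier S" "i = x \<otimes> (p \<otimes> y)"
      by blast
    with \<open>s \<in> carrier S\<close> assms(2) have "s \<otimes> i = (s \<otimes> x) \<otimes> (p \<otimes> y)"
      and "i \<otimes> s = x \<otimes> (p \<otimes> (y \<otimes> s))"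
      by (simp_all add: m_assoc)
    with \<open>s \<in> carrier S\<close> \<open>x \<in> carrier S\<close> \<open>y \<in> carrier S\<close>
    show "s \<otimes> i \<in> ?I" "i \<otimes> s \<in> ?I"
      by (blast intro: m_closed)+
  qed
  with assms(1,3) that show ?thesis
    unfolding sg_simple_def by blast
qed

end

locale cs_semigroup =
  fixes S :: "('b, 'c) monoid_scheme" (structure)
  assumes completely_simple: "completely_simple S"

sublocale cs_semigroup \<subseteq> sgrp
  using completely_simple by unfold_locales (simp add: completely_simple_def)

context cs_semigroup
begin

lemma primitive_idempotent_eq:
  "sg_primitive S p \<Longrightarrow> g \<in> carrier S \<Longrightarrow> g \<otimes> g = g \<Longrightarrow> p \<otimes> g = g \<Longrightarrow> g \<otimes> p = g \<Longrightarrow> g = p"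
  unfolding sg_primitive_def sg_idempotent_def by metis

lemma idempotent_imp_primitive:
  assumes e: "sg_idempotent S e"
  shows "sg_primitive S e"
  unfolding sg_primitive_def
proof (intro conjI e allI impI)
  fix h assume "sg_idempotent S h \<and> h = e \<otimes> h \<and> h = h \<otimes> e"
  then have h: "h \<in> carrier S" "h \<otimes> h = h" "e \<otimes> h = h" "h \<otimes> e = h"
    unfolding sg_idempotent_def by auto
  from e have ec: "e \<in> carrier S" and ee: "e \<otimes> e = e"
    unfolding sg_idempotent_def by auto
  obtain p where p: "sg_primitive S p"
    using completely_simple unfolding completely_simple_def by blast
  then have pc: "p \<in> carrier S" and pp: "p \<otimes> p = p"
    unfolding sg_primitive_def sg_idempotent_def by auto
  obtain x y where xy: "x \<in> carrier S" "y \<in> carrier S" and exy: "x \<otimes> (p \<otimes> y) = e"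
    using completely_simple pc ec unfolding completely_simple_def
    by (metis simple_two_sided_multiple)
  note rules = m_assoc pp m_assoc_subst[OF pp pc pc] ee m_assoc_subst[OF ee ec ec]
    h(2) m_assoc_subst[OF h(2) h(1) h(1)] h(3) m_assoc_subst[OF h(3) ec h(1)]
    h(4) m_assoc_subst[OF h(4) h(1) ec] exy m_assoc_subst3[OF exy xy(1) pc xy(2)]
  \<comment> \<open>conjugating h by the factors of e = x p y gives an idempotent below p, hence p itself\<close>
  define c where "c = p \<otimes> (y \<otimes> (h \<otimes> (x \<otimes> p)))"
  have "c \<in> carrier S" "c \<otimes> c = c" "p \<otimes> c = c" "c \<otimes> p = c"
    unfolding c_def using pc h(1) xy by (simp_all add: rules)
  then have "c = p"
    using p by (rule primitive_idempotent_eq[rotated])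
  have "h = e \<otimes> (x \<otimes> (p \<otimes> (c \<otimes> (p \<otimes> (y \<otimes> e)))))"
    unfolding c_def using pc ec h(1) xy by (simp add: rules)
  also have "\<dots> = e"
    unfolding \<open>c = p\<close> using pc ec xy by (simp add: rules)
  finally show "h = e" .
qed

lemma local_group_inverse:
  assumes e: "sg_idempotent S e" and a: "a \<in> carrier S" and ea: "e \<otimes> a = a" and ae: "a \<otimes> e = a"
  obtains k where "k \<in> carrier S" "a \<otimes> k = e" "k \<otimes> a = e" "e \<otimes> k = k" "k \<otimes> e = k"
proof -
  from e have ec: "e \<in> carrier S" and ee: "e \<otimes> e = e"
    unfolding sg_idempotent_def by auto
  have prim: "sg_primitive S e"
    using e by (rule idempotent_imp_primitive)
  obtain x y where xy: "x \<in> carrier S" "y \<in> carrier S" and xay: "x \<otimes> (a \<otimes> y) = e"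
    using completely_simple a ec unfolding completely_simple_def
    by (metis simple_two_sided_multiple)
  note rules = m_assoc ee m_assoc_subst[OF ee ec ec] ea m_assoc_subst[OF ea ec a]
    ae m_assoc_subst[OF ae a ec] xay m_assoc_subst3[OF xay xy(1) a xy(2)]
  define k where "k = e \<otimes> (y \<otimes> (e \<otimes> (x \<otimes> e)))"
  have "a \<otimes> k \<in> carrier S" "(a \<otimes> k) \<otimes> (a \<otimes> k) = a \<otimes> k"
    "e \<otimes> (a \<otimes> k) = a \<otimes> k" "(a \<otimes> k) \<otimes> e = a \<otimes> k"
    unfolding k_def using ec a xy by (simp_all add: rules)
  then have "a \<otimes> k = e"
    using prim by (rule primitive_idempotent_eq[rotated])
  moreover have "k \<otimes> a \<in> carrier S" "(k \<otimes> a) \<otimes> (k \<otimes> a) = k \<otimes> a"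
    "e \<otimes> (k \<otimes> a) = k \<otimes> a" "(k \<otimes> a) \<otimes> e = k \<otimes> a"
    unfolding k_def using ec a xy by (simp_all add: rules)
  then have "k \<otimes> a = e"
    using prim by (rule primitive_idempotent_eq[rotated])
  moreover have "k \<in> carrier S" "e \<otimes> k = k" "k \<otimes> e = k"
    unfolding k_def using ec xy by (simp_all add: rules)
  ultimately show ?thesis
    using that by blast
qed

lemma idempotents_RL_meet:
  assumes e: "sg_idempotent S e" and f: "sg_idempotent S f"
  obtains g where "g \<in> carrier S" "e \<otimes> g = g" "g \<otimes> e = e" "g \<otimes> f = g" "f \<otimes> g = f"
proof -
  from e f have ec: "e \<in> carrier S" and ee: "e \<otimes> e = e" and fc: "f \<in> carrier S" and ff: "f \<otimes> f = f"
    unfolding sg_idempotent_def by auto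
  note rules = m_assoc ee m_assoc_subst[OF ee ec ec] ff m_assoc_subst[OF ff fc fc]
  \<comment> \<open>g = e k for the inverse k of f e f in the group f S f\<close>
  obtain k where kc: "k \<in> carrier S" and fefk: "f \<otimes> e \<otimes> f \<otimes> k = f" and kfef: "k \<otimes> (f \<otimes> e \<otimes> f) = f"
    and fk: "f \<otimes> k = k" and kf: "k \<otimes> f = k"
    using local_group_inverse[OF f, of "f \<otimes> e \<otimes> f"] ec fc by (auto simp: rules)
  from fefk kfef have fek: "f \<otimes> (e \<otimes> k) = f" and kef: "k \<otimes> (e \<otimes> f) = f"
    using ec fc kc by (simp_all add: m_assoc fk m_assoc_subst[OF kf kc fc])
  have kek: "k \<otimes> (e \<otimes> k) = k"
    by (metis ec fk kc kef m_assoc m_closed fc)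
  have "e \<otimes> (k \<otimes> e) = e"
  proof (rule primitive_idempotent_eq[OF idempotent_imp_primitive[OF e]])
    show "e \<otimes> (k \<otimes> e) \<in> carrier S" "e \<otimes> (e \<otimes> (k \<otimes> e)) = e \<otimes> (k \<otimes> e)"
      "e \<otimes> (k \<otimes> e) \<otimes> e = e \<otimes> (k \<otimes> e)"
      using ec kc by (simp_all add: rules)
    show "e \<otimes> (k \<otimes> e) \<otimes> (e \<otimes> (k \<otimes> e)) = e \<otimes> (k \<otimes> e)"
      using ec kc by (simp add: rules m_assoc_subst3[OF kek kc ec kc])
  qed
  then show ?thesis
    using that[of "e \<otimes> k"] ec fc kc fek kf by (simp add: rules)
qed

lemma RL_idempotent_exists:
  assumes a: "sg_inverse S a a'" and b: "sg_inverse S b b'"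
  shows "\<exists>g. RL_idempotent S a b g"
proof -
  from a b have ac: "a \<in> carrier S" "a' \<in> carrier S" and aa: "a \<otimes> (a' \<otimes> a) = a" "a' \<otimes> (a \<otimes> a') = a'"
    and bc: "b \<in> carrier S" "b' \<in> carrier S" and bb: "b \<otimes> (b' \<otimes> b) = b" "b' \<otimes> (b \<otimes> b') = b'"
    unfolding sg_inverse_def by (auto simp: m_assoc)
  have "sg_idempotent S (a \<otimes> a')" "sg_idempotent S (b' \<otimes> b)"
    unfolding sg_idempotent_def using ac bc
    by (simp_all add: m_assoc m_assoc_subst3[OF aa(1) ac ac(1)]
        m_assoc_subst3[OF bb(2) bc(2) bc(1) bc(2)])
  then obtain g where gc: "g \<in> carrier S" and eg: "a \<otimes> a' \<otimes> g = g" and ge: "g \<otimes> (a \<otimes> a') = a \<otimes> a'"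
    and gf: "g \<otimes> (b' \<otimes> b) = g" and fg: "b' \<otimes> b \<otimes> g = b' \<otimes> b"
    by (rule idempotents_RL_meet)
  have "g \<otimes> g = g"
    by (metis ac eg ge gc m_assoc m_closed)
  moreover have "g \<otimes> a = a"
    by (metis aa(1) ac ge gc m_assoc m_closed)
  moreover have "g = a \<otimes> (a' \<otimes> g)"
    using eg ac gc by (simp add: m_assoc)
  moreover have "b \<otimes> g = b"
    by (metis bb(1) bc fg gc m_assoc m_closed)
  moreover have "g = g \<otimes> b' \<otimes> b"
    using gf bc gc by (simp add: m_assoc)
  ultimately show ?thesis
    unfolding RL_idempotent_def using ac bc gc by blast
qed

lemma RL_idempotent_rl_idem:
  "sg_inverse S a a' \<Longrightarrow> sg_inverse S b b' \<Longrightarrow> RL_idempotent S a b (rl_idem S a b)"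
  unfolding rl_idem_def by (rule someI_ex) (rule RL_idempotent_exists)

end

section \<open>The universal property\<close>

lemma hom_RL_idempotent:
  assumes "h \<in> hom G H" "a \<in> carrier G" "b \<in> carrier G" "RL_idempotent G a b g"
  shows "RL_idempotent H (h a) (h b) (h g)"
proof -
  obtain s t where "s \<in> carrier G" "g = a \<otimes>\<^bsub>G\<^esub> s" "t \<in> carrier G" "g = t \<otimes>\<^bsub>G\<^esub> b"
    using assms(4) unfolding RL_idempotent_def by blast
  with assms show ?thesis
    unfolding RL_idempotent_def by (metis hom_in_carrier hom_mult)
qed

lemma RL_idempotent_FQ_wedge: "RL_idempotent FQ (xi x) (xi y) (theta_class [Wg x y])"
  unfolding RL_idempotent_def xi_eq
proof (intro conjI bexI)
  show "theta_class [Wg x y] = theta_class [Lt x] \<otimes>\<^bsub>FQ\<^esub> theta_class [Lt (lprime x), Wg x y]"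
    and "theta_class [Wg x y] = theta_class [Wg x y, Lt (lprime y)] \<otimes>\<^bsub>FQ\<^esub> theta_class [Lt y]"
    and "theta_class [Wg x y] \<otimes>\<^bsub>FQ\<^esub> theta_class [Wg x y] = theta_class [Wg x y]"
    and "theta_class [Wg x y] \<otimes>\<^bsub>FQ\<^esub> theta_class [Lt x] = theta_class [Lt x]"
    and "theta_class [Lt y] \<otimes>\<^bsub>FQ\<^esub> theta_class [Wg x y] = theta_class [Lt y]"
    by (simp_all add: theta_class_mult theta_class_eq_iff redform_eq_rev_foldl_push)
qed simp_all

fun eval_letter :: "('b, 'c) monoid_scheme \<Rightarrow> ('a lit \<Rightarrow> 'b) \<Rightarrow> 'a tlet \<Rightarrow> 'b" where
  "eval_letter S \<nu> (Lt x) = \<nu> x"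
| "eval_letter S \<nu> (Wg x y) = rl_idem S (\<nu> x) (\<nu> y)"

fun eval_word :: "('b, 'c) monoid_scheme \<Rightarrow> ('a lit \<Rightarrow> 'b) \<Rightarrow> 'a tlet list \<Rightarrow> 'b" where
  "eval_word S \<nu> [] = undefined"
| "eval_word S \<nu> [a] = eval_letter S \<nu> a"
| "eval_word S \<nu> (a # b # w) = eval_letter S \<nu> a \<otimes>\<^bsub>S\<^esub> eval_word S \<nu> (b # w)"

definition eval_class :: "('b, 'c) monoid_scheme \<Rightarrow> ('a lit \<Rightarrow> 'b) \<Rightarrow> 'a tlet list set \<Rightarrow> 'b" where
  "eval_class S \<nu> A = eval_word S \<nu> (SOME u. u \<in> A)"

locale cs_matched = cs_semigroup +
  fixes \<nu> :: "'a lit \<Rightarrow> 'b"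
  assumes matched: "matched S \<nu>"
begin

lemma sg_inverse_lprime: "sg_inverse S (\<nu> z) (\<nu> (lprime z))"
  using matched unfolding matched_def sg_inverse_def by (cases z) auto

lemma nu_closed [simp]: "\<nu> z \<in> carrier S"
  using sg_inverse_lprime unfolding sg_inverse_def by blast

lemma RL_idempotent_eval_wedge: "RL_idempotent S (\<nu> x) (\<nu> y) (eval_letter S \<nu> (Wg x y))"
  using RL_idempotent_rl_idem[OF sg_inverse_lprime sg_inverse_lprime] by simp

lemma eval_letter_closed [simp]: "eval_letter S \<nu> a \<in> carrier S"
  using RL_idempotent_eval_wedge by (cases a) (auto simp: RL_idempotent_def)

lemma eval_letter_contract:
  assumes "contract a b = Some c"
  shows "eval_letter S \<nu> a \<otimes> eval_letter S \<nu> b = eval_letter S \<nu> c"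
proof (cases a; cases b)
  fix x y assume "a = Lt x" "b = Lt y"
  with assms have "x = lprime y" "c = Wg x y"
    by (auto split: if_splits)
  then have "RL_idempotent S (\<nu> x) (\<nu> y) (\<nu> x \<otimes> \<nu> y)"
    using sg_inverse_lprime[of y] by (simp add: RL_idempotent_inverse_product)
  with RL_idempotent_eval_wedge[of x y] show ?thesis
    using \<open>a = Lt x\<close> \<open>b = Lt y\<close> \<open>c = Wg x y\<close>
    by (simp add: RL_idempotent_unique[OF nu_closed nu_closed])
next
  fix x y z assume "a = Lt x" "b = Wg y z"
  with assms RL_idempotent_eval_wedge[of y x] show ?thesis
    by (auto simp: RL_idempotent_def split: if_splits)
next
  fix x y z assume "a = Wg x y" "b = Lt z"
  with assms RL_idempotent_eval_wedge[of x y] show ?thesis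
    by (auto simp: RL_idempotent_def split: if_splits)
next
  fix x y z w assume "a = Wg x y" "b = Wg z w"
  with assms show ?thesis
    using RL_idempotent_mult_same_left[OF _ RL_idempotent_eval_wedge RL_idempotent_eval_wedge]
      RL_idempotent_mult_same_right[OF _ RL_idempotent_eval_wedge RL_idempotent_eval_wedge]
    by (auto split: if_splits)
qed

lemma eval_word_closed: "w \<noteq> [] \<Longrightarrow> eval_word S \<nu> w \<in> carrier S"
  by (induction w rule: induct_list012) auto

lemma eval_word_Cons: "w \<noteq> [] \<Longrightarrow> eval_word S \<nu> (a # w) = eval_letter S \<nu> a \<otimes> eval_word S \<nu> w"
  by (cases w) auto

lemma eval_word_append:
  "u \<noteq> [] \<Longrightarrow> v \<noteq> [] \<Longrightarrow> eval_word S \<nu> (u @ v) = eval_word S \<nu> u \<otimes> eval_word S \<nu> v"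
proof (induction u)
  case (Cons a u)
  then show ?case
    by (cases "u = []") (simp_all add: eval_word_Cons eval_word_closed m_assoc)
qed simp

lemma eval_word_contract:
  assumes "contract a b = Some c"
  shows "eval_word S \<nu> (u @ [a, b] @ v) = eval_word S \<nu> (u @ [c] @ v)"
proof -
  have "eval_word S \<nu> ([a, b] @ v) = eval_word S \<nu> ([c] @ v)"
    using eval_letter_contract[OF assms]
    by (cases "v = []") (simp_all add: eval_word_Cons eval_word_closed flip: m_assoc)
  then show ?thesis
    by (induction u) (simp_all add: eval_word_Cons)
qed

lemma eval_word_red1s: "(s, t) \<in> red1\<^sup>* \<Longrightarrow> eval_word S \<nu> s = eval_word S \<nu> t"
  by (induction rule: rtrancl_induct) (auto simp: red1_iff_contract eval_word_contract[simplified])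

lemma eval_class_theta_class: "w \<noteq> [] \<Longrightarrow> eval_class S \<nu> (theta_class w) = eval_word S \<nu> w"
  unfolding eval_class_def
  by (metis eval_word_red1s mem_theta_class red1s_redform some_mem_theta_class)

lemma eval_class_hom: "eval_class S \<nu> \<in> hom FQ S"
proof (rule homI)
  fix A :: "'a tlet list set" assume "A \<in> carrier FQ"
  then show "eval_class S \<nu> A \<in> carrier S"
    by (auto simp: carrier_FQ eval_class_theta_class eval_word_closed)
next
  fix A B :: "'a tlet list set" assume "A \<in> carrier FQ" "B \<in> carrier FQ"
  then show "eval_class S \<nu> (A \<otimes>\<^bsub>FQ\<^esub> B) = eval_class S \<nu> A \<otimes> eval_class S \<nu> B"
    by (auto simp: carrier_FQ theta_class_mult eval_class_theta_class eval_word_append)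
qed

lemma eval_class_xi: "eval_class S \<nu> (xi y) = \<nu> y"
  by (simp add: xi_eq eval_class_theta_class)

lemma hom_eq_eval_class:
  assumes \<psi>: "\<psi> \<in> hom FQ S" "\<And>y. \<psi> (xi y) = \<nu> y" and "A \<in> carrier FQ"
  shows "\<psi> A = eval_class S \<nu> A"
proof -
  have letter: "\<psi> (theta_class [a]) = eval_letter S \<nu> a" for a
  proof (cases a)
    case (Wg x y)
    have "RL_idempotent S (\<nu> x) (\<nu> y) (\<psi> (theta_class [Wg x y]))"
      using hom_RL_idempotent[OF \<psi>(1) _ _ RL_idempotent_FQ_wedge] \<psi>(2) by (simp add: xi_eq)
    with Wg RL_idempotent_eval_wedge show ?thesis
      by (simp add: RL_idempotent_unique[OF nu_closed nu_closed])
  qed (simp add: \<psi>(2) flip: xi_eq)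
  have "\<psi> (theta_class w) = eval_word S \<nu> w" if "w \<noteq> []" for w
    using that
  proof (induction w)
    case (Cons a w)
    then show ?case
      using hom_mult[OF \<psi>(1), of "theta_class [a]" "theta_class w"]
      by (cases "w = []") (auto simp: letter theta_class_mult eval_word_Cons)
  qed simp
  with \<open>A \<in> carrier FQ\<close> show ?thesis
    by (auto simp: carrier_FQ eval_class_theta_class)
qed

end

theorem proposition2p6:
  shows "bs_congruence (Theta_CS :: ('a tlet list \<times> 'a tlet list) set) \<and>
    completely_simple (FQ :: 'a tlet list set monoid) \<and>
    matched (FQ :: 'a tlet list set monoid) xi \<and>
    (\<forall>(S :: ('b, 'c) monoid_scheme) (\<nu> :: 'a lit \<Rightarrow> 'b).
       completely_simple S \<and> matched S \<nu> \<longrightarrow>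
       (\<exists>\<phi> \<in> hom (FQ :: 'a tlet list set monoid) S.
          (\<forall>y. \<phi> (xi y) = \<nu> y) \<and>
          (\<forall>\<psi> \<in> hom (FQ :: 'a tlet list set monoid) S.
             (\<forall>y. \<psi> (xi y) = \<nu> y) \<longrightarrow> (\<forall>a \<in> carrier FQ. \<psi> a = \<phi> a))))"
proof (intro conjI allI impI)
  show "bs_congruence (Theta_CS :: ('a tlet list \<times> 'a tlet list) set)"
    by (rule bs_congruence_Theta_CS)
  show "completely_simple (FQ :: 'a tlet list set monoid)"
    by (rule completely_simple_FQ)
  show "matched (FQ :: 'a tlet list set monoid) xi"
    by (rule matched_FQ_xi)
next
  fix S :: "('b, 'c) monoid_scheme" and \<nu> :: "'a lit \<Rightarrow> 'b"
  assume "completely_simple S \<and> matched S \<nu>"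
  then interpret cs_matched S \<nu>
    by unfold_locales auto
  show "\<exists>\<phi> \<in> hom FQ S. (\<forall>y. \<phi> (xi y) = \<nu> y) \<and>
      (\<forall>\<psi> \<in> hom FQ S. (\<forall>y. \<psi> (xi y) = \<nu> y) \<longrightarrow> (\<forall>a \<in> carrier FQ. \<psi> a = \<phi> a))"
    using eval_class_hom eval_class_xi hom_eq_eval_class by blast
qed

end
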